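(* Assume $\mathscr{R}_0>\frac{\sigma_m(\mu+r)C_I}{\mu\beta}$ (equivalently $C_I<\frac{\beta A}{(\mu+r)(\mu+\beta+\rho)}$) and $$\frac{\beta^2\sigma_s}{(\mu+r)\sigma_m^2}\le C_I.$$ Then $E^*$ is the unique endemic equilibrium of (3) if $1<\mathscr{R}_0\le 1+\frac{\sigma_m(\mu+r)}{\mu\beta}C_I$, and $E_1^*$ is the unique endemic equilibrium of (3) if $\mathscr{R}_0>1+\frac{\sigma_m(\mu+r)}{\mu\beta}C_I$.
   Context: Let $A,\sigma_m,\sigma_s,\mu,\rho,\beta,r,C_I$ be positive constants. Write $[x]^+=\max\{0,x\}$ and $T(I_s)=rI_s$ if $I_s<C_I$, $T(I_s)=rC_I$ if $I_s\ge C_I$. System (3) is $$S'=A-\sigma_mSI_m-\sigma_sS[I_s-C_I]^+-\mu S,\quad I_m'=\sigma_mSI_m+\sigma_sS[I_s-C_I]^+-(\mu+\rho+\beta)I_m,\quad I_s'=\beta I_m-T(I_s)-\mu I_s.$$ $\mathscr{R}_0=\frac{A\sigma_m}{\mu(\mu+\beta+\rho)}$. An endemic equilibrium is an equilibrium of (3) with $S,I_m,I_s>0$. $E^*=(S^*,I_m^*,I_s^* )$ with $S^*=\frac{\mu+\beta+\rho}{\sigma_m}$, $I_m^*=\frac{\mu(\mathscr{R}_0-1)}{\sigma_m}$, $I_s^*=\frac{\mu\beta(\mathscr{R}_0-1)}{\sigma_m(\mu+r)}$. Let $p=\frac{(\mu+r)\sigma_m\sigma_sC_I}{\mu(\mu\sigma_m+\beta\sigma_s)}$,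 $q=\frac{\mu\sigma_m}{\mu\sigma_m+\beta\sigma_s}$, and $S_{1,2}^*=\frac{\mu+\beta+\rho}{2\sigma_m}\big\{\mathscr{R}_0-p+q\mp\sqrt{(\mathscr{R}_0-p-q)^2-4pq}\big\}$ (minus sign for $S_1^*$, plus for $S_2^*$), $I_{m_i}^*=\frac{\mu\mathscr{R}_0}{\sigma_m}-\frac{\mu S_i^*}{\mu+\beta+\rho}$, $I_{s_i}^*=\frac{\beta\mathscr{R}_0}{\sigma_m}-\frac{\beta S_i^*}{\mu+\beta+\rho}-\frac{rC_I}{\mu}$, $E_i^*=(S_i^*,I_{m_i}^*,I_{s_i}^* )$, $i=1,2$ (these are the candidate equilibria in the region $I_s>C_I$). "$E_i^*$ exists" / "$E_i^*$ is an endemic equilibrium" means $S_i^*$ is real, $S_i^*>0$, $I_{m_i}^*>0$ and $I_{s_i}^*>C_I$; "$E^*$ exists" means $E^*$ is an endemic equilibrium. *)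

theory Defs
  imports Complex_Main
begin

text \<open>Parameters in the order: A, sigma_m (sm), sigma_s (ss), mu, rho, beta, r, C_I (CI).\<close>

definition pos_part :: "real \<Rightarrow> real" where
  "pos_part x = max 0 x"

definition Tfun :: "real \<Rightarrow> real \<Rightarrow> real \<Rightarrow> real" where
  "Tfun r CI Isv = (if Isv < CI then r * Isv else r * CI)"

definition rhs :: "real \<Rightarrow> real \<Rightarrow> real \<Rightarrow> real \<Rightarrow> real \<Rightarrow> real \<Rightarrow> real \<Rightarrow> real
    \<Rightarrow> real \<times> real \<times> real \<Rightarrow> real \<times> real \<times> real" where
  "rhs A sm ss mu rho beta r CI E = (case E of (S, Imv, Isv) \<Rightarrow>
     (A - sm * S * Imv - ss * S * pos_part (Isv - CI) - mu * S,
      sm * S * Imv + ss * S * pos_part (Isv - CI) - (mu + rho + beta) * Imv,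
      beta * Imv - Tfun r CI Isv - mu * Isv))"

definition is_equilibrium :: "real \<Rightarrow> real \<Rightarrow> real \<Rightarrow> real \<Rightarrow> real \<Rightarrow> real \<Rightarrow> real \<Rightarrow> real
    \<Rightarrow> real \<times> real \<times> real \<Rightarrow> bool" where
  "is_equilibrium A sm ss mu rho beta r CI E \<longleftrightarrow> rhs A sm ss mu rho beta r CI E = (0, 0, 0)"

definition is_endemic_eq :: "real \<Rightarrow> real \<Rightarrow> real \<Rightarrow> real \<Rightarrow> real \<Rightarrow> real \<Rightarrow> real \<Rightarrow> real
    \<Rightarrow> real \<times> real \<times> real \<Rightarrow> bool" where
  "is_endemic_eq A sm ss mu rho beta r CI E \<longleftrightarrow>
     is_equilibrium A sm ss mu rho beta r CI E \<and>
     (case E of (S, Imv, Isv) \<Rightarrow> S > 0 \<and> Imv > 0 \<and> Isv > 0)"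

definition R0 :: "real \<Rightarrow> real \<Rightarrow> real \<Rightarrow> real \<Rightarrow> real \<Rightarrow> real" where
  "R0 A sm mu rho beta = A * sm / (mu * (mu + beta + rho))"

definition Estar :: "real \<Rightarrow> real \<Rightarrow> real \<Rightarrow> real \<Rightarrow> real \<Rightarrow> real \<Rightarrow> real \<times> real \<times> real" where
  "Estar A sm mu rho beta r =
     (let R = R0 A sm mu rho beta in
      ((mu + beta + rho) / sm,
       mu * (R - 1) / sm,
       mu * beta * (R - 1) / (sm * (mu + r))))"

definition p_par :: "real \<Rightarrow> real \<Rightarrow> real \<Rightarrow> real \<Rightarrow> real \<Rightarrow> real \<Rightarrow> real" where
  "p_par sm ss mu beta r CI = (mu + r) * sm * ss * CI / (mu * (mu * sm + beta * ss))"

definition q_par :: "real \<Rightarrow> real \<Rightarrow> real \<Rightarrow> real \<Rightarrow> real" where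
  "q_par sm ss mu beta = mu * sm / (mu * sm + beta * ss)"

definition disc :: "real \<Rightarrow> real \<Rightarrow> real \<Rightarrow> real \<Rightarrow> real \<Rightarrow> real \<Rightarrow> real \<Rightarrow> real \<Rightarrow> real" where
  "disc A sm ss mu rho beta r CI =
     (let R = R0 A sm mu rho beta; p = p_par sm ss mu beta r CI; q = q_par sm ss mu beta
      in (R - p - q)^2 - 4 * p * q)"

definition S1 :: "real \<Rightarrow> real \<Rightarrow> real \<Rightarrow> real \<Rightarrow> real \<Rightarrow> real \<Rightarrow> real \<Rightarrow> real \<Rightarrow> real" where
  "S1 A sm ss mu rho beta r CI =
     (let R = R0 A sm mu rho beta; p = p_par sm ss mu beta r CI; q = q_par sm ss mu beta
      in (mu + beta + rho) / (2 * sm) * (R - p + q - sqrt (disc A sm ss mu rho beta r CI)))"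

definition E1 :: "real \<Rightarrow> real \<Rightarrow> real \<Rightarrow> real \<Rightarrow> real \<Rightarrow> real \<Rightarrow> real \<Rightarrow> real \<Rightarrow> real \<times> real \<times> real" where
  "E1 A sm ss mu rho beta r CI =
     (let R = R0 A sm mu rho beta; S = S1 A sm ss mu rho beta r CI
      in (S,
          mu * R / sm - mu * S / (mu + beta + rho),
          beta * R / sm - beta * S / (mu + beta + rho) - r * CI / mu))"

end

theory Submission
  imports Defs
begin

(* Let c = sm (mu + r) CI / (mu beta). Below the treatment capacity (Is <= CI) the equilibrium
   equations force S = (mu + beta + rho) / sm, which yields E*, admissible exactly when
   1 < R0 <= 1 + c. Above it, writing x = sm S / (mu + beta + rho), the equilibria are the roots
   x in (0, R0 - c) of f x = x^2 - (R0 - p + q) x + q R0; since p = c (1 - q) one has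
   f (R0 - c) = c q (1 - (R0 - c)). If R0 <= 1 + c, the hypothesis on CI places the vertex of f
   to the right of R0 - c, so f > 0 on the interval. If R0 > 1 + c, then f 0 > 0 > f (R0 - c),
   so the smaller root is the only one in the interval, and it gives E1. *)

lemma quadratic_pos_left_of_vertex:
  fixes b k x y :: real
  assumes "2 * y \<le> b" and "0 \<le> y^2 - b * y + k" and "x < y"
  shows "0 < x^2 - b * x + k"
proof -
  have "x^2 - b * x + k = (y^2 - b * y + k) + (y - x) * (b - x - y)"
    by (simp add: algebra_simps power2_eq_square)
  moreover have "0 < (y - x) * (b - x - y)" using assms(1,3) by simp
  ultimately show ?thesis using assms(2) by linarith
qed

lemma quadratic_factor:
  fixes b k s x :: real
  assumes "s^2 = b^2 - 4 * k"
  shows "x^2 - b * x + k = (x - (b - s) / 2) * (x - (b + s) / 2)"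
  using assms by (simp add: field_simps power2_eq_square)

lemma quadratic_unique_root_below:
  fixes b k y :: real
  assumes "0 < y" and "0 < k" and neg: "y^2 - b * y + k < 0"
  shows "0 < b^2 - 4 * k"
    and "0 < x \<and> x < y \<and> x^2 - b * x + k = 0 \<longleftrightarrow> x = (b - sqrt (b^2 - 4 * k)) / 2"
proof -
  have "b^2 - 4 * k = (2 * y - b)^2 - 4 * (y^2 - b * y + k)"
    by (simp add: algebra_simps power2_eq_square)
  then show disc: "0 < b^2 - 4 * k" using neg by (smt (verit) zero_le_power2)
  define s where "s = sqrt (b^2 - 4 * k)"
  have s: "s^2 = b^2 - 4 * k" "0 \<le> s" using disc by (simp_all add: s_def)
  have "(y - (b - s) / 2) * (y - (b + s) / 2) < 0" using neg quadratic_factor[OF s(1)] by simp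
  then have between: "(b - s) / 2 < y" "y < (b + s) / 2"
    using s(2) by (auto simp: mult_less_0_iff)
  have "(b - s) / 2 * ((b + s) / 2) = k" using s(1) by (simp add: field_simps power2_eq_square)
  then have "0 < (b - s) / 2" using \<open>0 < k\<close> \<open>0 < y\<close> between(2)
    by (smt (verit) mult_nonpos_nonneg)
  then show "0 < x \<and> x < y \<and> x^2 - b * x + k = 0 \<longleftrightarrow> x = (b - sqrt (b^2 - 4 * k)) / 2"
    using between unfolding quadratic_factor[OF s(1), of x] s_def[symmetric] by auto
qed

lemma triple_neq_if_third_neq: "z \<noteq> snd (snd E) \<Longrightarrow> (x, y, z) \<noteq> E"
  by auto

locale treatment_model =
  fixes A sm ss mu rho beta r CI :: real
  assumes pos: "A > 0" "sm > 0" "ss > 0" "mu > 0" "rho > 0" "beta > 0" "r > 0" "CI > 0"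
begin

abbreviation "R \<equiv> R0 A sm mu rho beta"
abbreviation "D \<equiv> mu + beta + rho"
abbreviation "q \<equiv> q_par sm ss mu beta"

definition threshold :: real where
  "threshold = sm * (mu + r) * CI / (mu * beta)"

definition quad_coeff :: real where
  "quad_coeff = R - p_par sm ss mu beta r CI + q"

definition quad :: "real \<Rightarrow> real" where
  "quad x = x^2 - quad_coeff * x + q * R"

definition branch :: "real \<Rightarrow> real \<times> real \<times> real" where
  "branch x = (D * x / sm, mu * (R - x) / sm, beta * (R - x) / sm - r * CI / mu)"

lemma threshold_pos: "0 < threshold"
  using pos by (simp add: threshold_def)

lemma q_bounds: "0 < q" "q < 1"
  using pos by (simp_all add: q_par_def add_pos_pos)

lemma p_par_eq: "p_par sm ss mu beta r CI = threshold * (1 - q)"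
proof -
  define K where "K = mu * sm + beta * ss"
  have "0 < K" using pos by (simp add: K_def add_pos_pos)
  then show ?thesis using pos unfolding p_par_def q_par_def threshold_def K_def[symmetric]
    by (simp add: field_simps) (simp add: K_def algebra_simps)
qed

lemma A_eq: "A = R * mu * D / sm"
proof -
  have "A = A * sm / (mu * d) * mu * d / sm" if "d \<noteq> 0" for d
    using pos that by simp
  moreover have "D \<noteq> 0" using pos by simp
  ultimately show ?thesis unfolding R0_def by blast
qed

lemma disc_eq: "disc A sm ss mu rho beta r CI = quad_coeff^2 - 4 * (q * R)"
  by (simp add: disc_def quad_coeff_def Let_def algebra_simps power2_eq_square)

lemma quad_at_threshold: "quad (R - threshold) = threshold * q * (1 - (R - threshold))"
  by (simp add: quad_def quad_coeff_def p_par_eq algebra_simps power2_eq_square)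

lemma vertex_right_of_threshold:
  assumes "beta^2 * ss / ((mu + r) * sm^2) \<le> CI"
  shows "1 + threshold \<le> threshold * (1 + q) + q"
proof -
  define K where "K = mu * sm + beta * ss"
  have K: "0 < K" using pos by (simp add: K_def add_pos_pos)
  have "threshold * q - (1 - q) = (CI * ((mu + r) * sm^2) - beta^2 * ss) / (beta * K)"
    using pos K unfolding threshold_def q_par_def K_def[symmetric]
    by (simp add: field_simps) (simp add: K_def algebra_simps power2_eq_square)
  moreover have "beta^2 * ss \<le> CI * ((mu + r) * sm^2)"
    using assms pos by (simp add: pos_divide_le_eq)
  ultimately have "0 \<le> threshold * q - (1 - q)" using pos K by simp
  then show ?thesis by (simp add: algebra_simps)
qed

lemma endemic_eq_iff:
  fixes S Im Is :: real
  shows "is_endemic_eq A sm ss mu rho beta r CI (S, Im, Is) \<longleftrightarrow>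
     0 < S \<and> 0 < Im \<and> 0 < Is \<and> is_equilibrium A sm ss mu rho beta r CI (S, Im, Is)"
  by (auto simp: is_endemic_eq_def)

lemma Estar_eq:
  "Estar A sm mu rho beta r = (D / sm, mu * (R - 1) / sm, beta * (mu * (R - 1) / sm) / (mu + r))"
  by (simp add: Estar_def Let_def)

lemma endemic_below_iff:
  fixes S Im Is :: real
  assumes "Is \<le> CI"
  shows "is_endemic_eq A sm ss mu rho beta r CI (S, Im, Is) \<longleftrightarrow>
    1 < R \<and> (S, Im, Is) = Estar A sm mu rho beta r"
proof -
  have "is_endemic_eq A sm ss mu rho beta r CI (S, Im, Is) \<longleftrightarrow>
      0 < S \<and> 0 < Im \<and> 0 < Is \<and> A - sm * S * Im - mu * S = 0 \<and> (sm * S - D) * Im = 0 \<and>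
      beta * Im - (mu + r) * Is = 0"
    using assms
    by (auto simp: endemic_eq_iff is_equilibrium_def rhs_def pos_part_def Tfun_def algebra_simps)
  also have "\<dots> \<longleftrightarrow> 1 < R \<and> S = D / sm \<and> Im = mu * (R - 1) / sm \<and> Is = beta * Im / (mu + r)"
  proof
    assume H: "0 < S \<and> 0 < Im \<and> 0 < Is \<and> A - sm * S * Im - mu * S = 0 \<and> (sm * S - D) * Im = 0 \<and>
      beta * Im - (mu + r) * Is = 0"
    then have Im_pos: "0 < Im" and A0: "A - sm * S * Im - mu * S = 0" and SD: "sm * S = D"
      by auto
    have Is: "Is = beta * Im / (mu + r)"
      using H pos by (simp add: field_simps)
    have S: "S = D / sm" using SD pos by (simp add: field_simps)
    have "A - sm * S * Im - mu * S = D / sm * (mu * (R - 1) - sm * Im)"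
      using pos unfolding S by (subst A_eq) (simp add: field_simps)
    then have "mu * (R - 1) - sm * Im = 0" using A0 pos by simp
    then have Im: "Im = mu * (R - 1) / sm" using pos by (simp add: field_simps)
    then have "0 < mu * (R - 1) / sm" using Im_pos by simp
    then have "1 < R" using pos by (simp add: zero_less_divide_iff zero_less_mult_iff)
    then show "1 < R \<and> S = D / sm \<and> Im = mu * (R - 1) / sm \<and> Is = beta * Im / (mu + r)"
      using S Im Is by simp
  next
    assume H: "1 < R \<and> S = D / sm \<and> Im = mu * (R - 1) / sm \<and> Is = beta * Im / (mu + r)"
    then have S: "S = D / sm" and Im: "Im = mu * (R - 1) / sm" by simp_all
    have "A - sm * S * Im - mu * S = 0"
      unfolding S Im using pos by (subst A_eq) (simp add: field_simps)
    then show "0 < S \<and> 0 < Im \<and> 0 < Is \<and> A - sm * S * Im - mu * S = 0 \<and> (sm * S - D) * Im = 0 \<and>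
      beta * Im - (mu + r) * Is = 0"
      using H pos by simp
  qed
  finally show ?thesis by (auto simp: Estar_eq)
qed

lemma Estar_le_iff: "snd (snd (Estar A sm mu rho beta r)) \<le> CI \<longleftrightarrow> R \<le> 1 + threshold"
proof -
  define e where "e = mu + r"
  have "0 < e" using pos by (simp add: e_def)
  then have "snd (snd (Estar A sm mu rho beta r)) - CI = mu * beta / (sm * e) * (R - 1 - threshold)"
    using pos by (simp add: Estar_eq threshold_def e_def[symmetric] field_simps)
  moreover have "0 < mu * beta / (sm * e)" using pos \<open>0 < e\<close> by simp
  ultimately show ?thesis by (smt (verit) mult_pos_pos mult_pos_neg zero_less_mult_pos)
qed

lemma second_equation_on_branch:
  fixes S Im Is x :: real
  assumes "(S, Im, Is) = branch x"
  shows "sm * S * Im + ss * S * (Is - CI) - D * Im = - (D * (mu * sm + beta * ss) / sm^2) * quad x"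
proof -
  define K where "K = mu * sm + beta * ss"
  define d where "d = D"
  define R' where "R' = R"
  have "0 < K" "0 < d" using pos by (simp_all add: K_def d_def add_pos_pos)
  moreover have "S = d * x / sm" and "Im = mu * (R' - x) / sm"
    and "Is = beta * (R' - x) / sm - r * CI / mu"
    using assms by (simp_all add: branch_def d_def R'_def)
  ultimately show ?thesis
    using pos unfolding quad_def quad_coeff_def p_par_def q_par_def K_def[symmetric]
      d_def[symmetric] R'_def[symmetric]
    by (simp, simp add: field_simps, simp add: K_def algebra_simps power2_eq_square)
qed

lemma on_branch_iff:
  fixes S Im Is x :: real
  shows "(S, Im, Is) = branch x \<longleftrightarrow>
    x = sm * S / D \<and> A - mu * S - D * Im = 0 \<and> beta * Im - r * CI - mu * Is = 0"
proof -
  have D: "0 < D" using pos by simp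
  have "S = D * x / sm \<longleftrightarrow> x = sm * S / D" using D pos by (auto simp: field_simps)
  moreover have "A - mu * S - D * Im = D * (mu * (R - x) / sm - Im)" if "S = D * x / sm"
    using pos unfolding that by (subst A_eq) (simp add: field_simps)
  moreover have "beta * Im - r * CI - mu * Is = mu * (beta * (R - x) / sm - r * CI / mu - Is)"
    if "Im = mu * (R - x) / sm"
    using pos unfolding that by (simp add: field_simps)
  ultimately show ?thesis using D pos unfolding branch_def by auto
qed

lemma equilibrium_above_iff:
  fixes S Im Is :: real
  assumes "CI < Is"
  shows "is_equilibrium A sm ss mu rho beta r CI (S, Im, Is) \<longleftrightarrow>
    (\<exists>x. quad x = 0 \<and> (S, Im, Is) = branch x)"
proof -
  have "is_equilibrium A sm ss mu rho beta r CI (S, Im, Is) \<longleftrightarrow>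
      sm * S * Im + ss * S * (Is - CI) - D * Im = 0 \<and> A - mu * S - D * Im = 0 \<and>
      beta * Im - r * CI - mu * Is = 0"
    using assms by (auto simp: is_equilibrium_def rhs_def pos_part_def Tfun_def algebra_simps)
  also have "\<dots> \<longleftrightarrow> (\<exists>x. quad x = 0 \<and> (S, Im, Is) = branch x)"
  proof -
    have "0 < D * (mu * sm + beta * ss) / sm^2" using pos by (simp add: add_pos_pos)
    then show ?thesis using on_branch_iff second_equation_on_branch by force
  qed
  finally show ?thesis .
qed

lemma branch_above_iff: "CI < snd (snd (branch x)) \<longleftrightarrow> x < R - threshold"
proof -
  have "snd (snd (branch x)) - CI = beta / sm * (R - threshold - x)"
    using pos by (simp add: branch_def threshold_def field_simps)
  moreover have "0 < beta / sm" using pos by simp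
  ultimately show ?thesis by (smt (verit) mult_pos_pos mult_pos_neg zero_less_mult_pos)
qed

lemma endemic_above_iff:
  fixes S Im Is :: real
  assumes "CI < Is"
  shows "is_endemic_eq A sm ss mu rho beta r CI (S, Im, Is) \<longleftrightarrow>
    (\<exists>x. 0 < x \<and> x < R - threshold \<and> quad x = 0 \<and> (S, Im, Is) = branch x)"
proof -
  have "0 < S \<and> 0 < Im \<and> 0 < Is \<longleftrightarrow> 0 < x \<and> x < R - threshold" if "(S, Im, Is) = branch x" for x
  proof -
    have "x < R - threshold" using assms branch_above_iff[of x] that[symmetric] by simp
    then have "x < R" using threshold_pos by simp
    then show ?thesis using assms that pos \<open>x < R - threshold\<close>
      by (auto simp: branch_def zero_less_mult_iff zero_less_divide_iff)
  qed
  then show ?thesis unfolding endemic_eq_iff equilibrium_above_iff[OF assms] by blast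
qed

lemma E1_eq:
  "E1 A sm ss mu rho beta r CI = branch ((quad_coeff - sqrt (disc A sm ss mu rho beta r CI)) / 2)"
proof -
  define d where "d = D"
  have "0 < d" using pos by (simp add: d_def)
  then show ?thesis using pos
    unfolding E1_def S1_def branch_def quad_coeff_def Let_def d_def[symmetric]
    by (simp add: field_simps)
qed

lemma endemic_iff_Estar:
  assumes "beta^2 * ss / ((mu + r) * sm^2) \<le> CI" and "1 < R" and "R \<le> 1 + threshold"
  shows "is_endemic_eq A sm ss mu rho beta r CI E \<longleftrightarrow> E = Estar A sm mu rho beta r"
proof -
  obtain S Im Is where E: "E = (S, Im, Is)" by (cases E) auto
  have "2 * (R - threshold) \<le> quad_coeff"
    using vertex_right_of_threshold[OF assms(1)] assms(3)
    by (simp add: quad_coeff_def p_par_eq algebra_simps)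
  moreover have "0 \<le> quad (R - threshold)"
    using assms(3) threshold_pos q_bounds by (simp add: quad_at_threshold)
  ultimately have no_root: "quad x \<noteq> 0" if "x < R - threshold" for x
    using quadratic_pos_left_of_vertex that unfolding quad_def by (metis less_irrefl)
  show ?thesis
  proof (cases "Is \<le> CI")
    case True
    then show ?thesis unfolding E endemic_below_iff[OF True] using assms(2) by simp
  next
    case False
    then have "\<not> is_endemic_eq A sm ss mu rho beta r CI (S, Im, Is)"
      using endemic_above_iff no_root by (auto simp: not_le)
    moreover have "(S, Im, Is) \<noteq> Estar A sm mu rho beta r"
      using False Estar_le_iff assms(3) by (intro triple_neq_if_third_neq) auto
    ultimately show ?thesis unfolding E by simp
  qed
qed

lemma endemic_iff_E1:
  assumes "1 + threshold < R"
  shows "0 \<le> disc A sm ss mu rho beta r CI"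
    and "is_endemic_eq A sm ss mu rho beta r CI E \<longleftrightarrow> E = E1 A sm ss mu rho beta r CI"
proof -
  define x\<^sub>1 where "x\<^sub>1 = (quad_coeff - sqrt (disc A sm ss mu rho beta r CI)) / 2"
  have "0 < R - threshold" "0 < q * R"
    using assms threshold_pos q_bounds by simp_all
  moreover have "quad (R - threshold) < 0"
    using assms threshold_pos q_bounds by (simp add: quad_at_threshold mult_pos_neg)
  ultimately have "0 < quad_coeff^2 - 4 * (q * R)"
    and root: "\<And>x. 0 < x \<and> x < R - threshold \<and> quad x = 0 \<longleftrightarrow> x = x\<^sub>1"
    using quadratic_unique_root_below unfolding quad_def x\<^sub>1_def disc_eq by blast+
  then show "0 \<le> disc A sm ss mu rho beta r CI" by (simp add: disc_eq)
  have E1_above: "CI < snd (snd (E1 A sm ss mu rho beta r CI))"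
    using root[of x\<^sub>1] unfolding E1_eq x\<^sub>1_def[symmetric] branch_above_iff by blast
  obtain S Im Is where E: "E = (S, Im, Is)" by (cases E) auto
  show "is_endemic_eq A sm ss mu rho beta r CI E \<longleftrightarrow> E = E1 A sm ss mu rho beta r CI"
  proof (cases "Is \<le> CI")
    case True
    have "(S, Im, Is) \<noteq> Estar A sm mu rho beta r"
      using True Estar_le_iff assms by (intro triple_neq_if_third_neq) auto
    moreover have "(S, Im, Is) \<noteq> E1 A sm ss mu rho beta r CI"
      using True E1_above by (intro triple_neq_if_third_neq) auto
    ultimately show ?thesis unfolding E endemic_below_iff[OF True] by simp
  next
    case False
    then have "CI < Is" by simp
    show ?thesis
      unfolding E endemic_above_iff[OF \<open>CI < Is\<close>] E1_eq x\<^sub>1_def[symmetric]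
    proof
      assume "\<exists>x. 0 < x \<and> x < R - threshold \<and> quad x = 0 \<and> (S, Im, Is) = branch x"
      then obtain x where "0 < x \<and> x < R - threshold \<and> quad x = 0" and "(S, Im, Is) = branch x"
        by blast
      then show "(S, Im, Is) = branch x\<^sub>1" using root[of x] by simp
    next
      assume "(S, Im, Is) = branch x\<^sub>1"
      then show "\<exists>x. 0 < x \<and> x < R - threshold \<and> quad x = 0 \<and> (S, Im, Is) = branch x"
        using root[of x\<^sub>1] by blast
    qed
  qed
qed

end

theorem theorem2p1:
  fixes A sm ss mu rho beta r CI :: real
  assumes pos: "A > 0" "sm > 0" "ss > 0" "mu > 0" "rho > 0" "beta > 0" "r > 0" "CI > 0"
    and hR0: "R0 A sm mu rho beta > sm * (mu + r) * CI / (mu * beta)"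
    and hCI: "beta^2 * ss / ((mu + r) * sm^2) \<le> CI"
  shows "(1 < R0 A sm mu rho beta \<and> R0 A sm mu rho beta \<le> 1 + sm * (mu + r) / (mu * beta) * CI \<longrightarrow>
           (\<forall>E. is_endemic_eq A sm ss mu rho beta r CI E \<longleftrightarrow> E = Estar A sm mu rho beta r)) \<and>
         (R0 A sm mu rho beta > 1 + sm * (mu + r) / (mu * beta) * CI \<longrightarrow>
           disc A sm ss mu rho beta r CI \<ge> 0 \<and>
           (\<forall>E. is_endemic_eq A sm ss mu rho beta r CI E \<longleftrightarrow> E = E1 A sm ss mu rho beta r CI))"
proof -
  interpret treatment_model A sm ss mu rho beta r CI
    using pos by unfold_locales
  have "sm * (mu + r) / (mu * beta) * CI = threshold"
    by (simp add: threshold_def)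
  then show ?thesis using endemic_iff_Estar[OF hCI] endemic_iff_E1 by auto
qed

end
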